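(* Let $X$ be a topological space with $|X|\ge 2$ and $G$ an infinite Abelian group. If $X$ is not anti-discrete and has a base of clopen sets, then every Korovin orbit $G_f$ in $X^G$ is a regular zero-dimensional space.
   Context: $X^G$ carries the product topology. For $f\in X^G$ and $g\in G$ let $gf\in X^G$ be given by $(gf)(x)=f(xg)$, and let $G_f=\{gf:g\in G\}\subseteq X^G$ with the subspace topology. The map $f\colon G\to X$ is a Korovin mapping if $\pi_M(G_f)=X^M$ for every countable $M\subseteq G$, where $\pi_M\colon X^G\to X^M$ is the projection; in that case $G_f$ is called a Korovin orbit. A space is anti-discrete if its only open sets are $\emptyset$ and the whole space. Regular means $T_1$ and: every open neighborhood $U$ of a point $x$ contains an open neighborhood $V$ of $x$ with $\overline{V}\subseteq U$. Zero-dimensional means having a base of clopen sets. *)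

theory Defs
  imports "HOL-Analysis.Analysis"
begin

definition shift_act :: "'g::ab_group_add \<Rightarrow> ('g \<Rightarrow> 'a) \<Rightarrow> ('g \<Rightarrow> 'a)" where
  "shift_act g f = (\<lambda>x. f (x + g))"

definition orbit_of :: "('g::ab_group_add \<Rightarrow> 'a) \<Rightarrow> ('g \<Rightarrow> 'a) set" where
  "orbit_of f = {shift_act g f | g. g \<in> UNIV}"

definition korovin_mapping :: "'a topology \<Rightarrow> ('g::ab_group_add \<Rightarrow> 'a) \<Rightarrow> bool" where
  "korovin_mapping X f \<longleftrightarrow>
     (\<forall>x. f x \<in> topspace X) \<and>
     (\<forall>M. countable M \<longrightarrow> (\<lambda>h. restrict h M) ` orbit_of f = PiE M (\<lambda>_. topspace X))"

definition anti_discrete :: "'a topology \<Rightarrow> bool" where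
  "anti_discrete X \<longleftrightarrow> (\<forall>U. openin X U \<longrightarrow> U = {} \<or> U = topspace X)"

definition zero_dimensional :: "'a topology \<Rightarrow> bool" where
  "zero_dimensional X \<longleftrightarrow>
     (\<forall>U x. openin X U \<and> x \<in> U \<longrightarrow> (\<exists>V. openin X V \<and> closedin X V \<and> x \<in> V \<and> V \<subseteq> U))"

end

theory Submission
  imports Defs
begin

text \<open>Zero-dimensionality passes to products (shrink each of the finitely many nontrivial factors
of a basic open box to a clopen neighbourhood) and to subspaces, and it implies regularity, so
the orbit is regular and zero-dimensional as a subspace of \<open>X\<^sup>G\<close>.  For \<open>T\<^sub>1\<close>, take distinct orbit
points \<open>g f\<close>, \<open>h f\<close> and an open \<open>U\<close> with \<open>a \<in> U\<close>, \<open>b \<notin> U\<close>; since \<open>f\<close> is Korovin there is \<open>s\<close> with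
\<open>f s = a\<close> and \<open>f (s + h - g) = b\<close>, so the two points differ at the coordinate \<open>s - g\<close> in a way
that \<open>U\<close> detects.\<close>

lemma zero_dimensional_product_topology:
  assumes "\<And>i. i \<in> I \<Longrightarrow> zero_dimensional (X i)"
  shows "zero_dimensional (product_topology X I)"
  unfolding zero_dimensional_def
proof (intro allI impI, elim conjE)
  fix S x
  assume "openin (product_topology X I) S" and "x \<in> S"
  then obtain U where U_fin: "finite {i \<in> I. U i \<noteq> topspace (X i)}"
    and U_open: "\<forall>i\<in>I. openin (X i) (U i)" and x_U: "x \<in> PiE I U" and U_S: "PiE I U \<subseteq> S"
    by (auto simp: openin_product_topology_alt)
  have "\<forall>i\<in>I. \<exists>W. openin (X i) W \<and> closedin (X i) W \<and> x i \<in> W \<and> W \<subseteq> U i"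
    using assms U_open x_U unfolding zero_dimensional_def by (blast dest: PiE_mem)
  then obtain W where W: "\<And>i. i \<in> I \<Longrightarrow>
      openin (X i) (W i) \<and> closedin (X i) (W i) \<and> x i \<in> W i \<and> W i \<subseteq> U i"
    by metis
  define V where "V i = (if U i = topspace (X i) then topspace (X i) else W i)" for i
  have V: "openin (X i) (V i)" "closedin (X i) (V i)" "x i \<in> V i" "V i \<subseteq> U i" if "i \<in> I" for i
    using W[OF that] by (auto simp: V_def)
  have "finite {i \<in> I. V i \<noteq> topspace (X i)}"
    by (rule finite_subset[OF _ U_fin]) (auto simp: V_def)
  then have "openin (product_topology X I) (PiE I V)"
    using V by (auto simp: openin_PiE_gen)
  moreover have "closedin (product_topology X I) (PiE I V)"
    using V by (auto simp: closedin_product_topology)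
  moreover have "x \<in> PiE I V"
    using x_U V by (auto simp: PiE_iff)
  moreover have "PiE I V \<subseteq> S"
    using order_trans[OF PiE_mono U_S] V(4) by blast
  ultimately show "\<exists>V. openin (product_topology X I) V \<and> closedin (product_topology X I) V
      \<and> x \<in> V \<and> V \<subseteq> S"
    by blast
qed

lemma zero_dimensional_subtopology:
  assumes "zero_dimensional X"
  shows "zero_dimensional (subtopology X T)"
  unfolding zero_dimensional_def
proof (intro allI impI, elim conjE)
  fix U x
  assume "openin (subtopology X T) U" and "x \<in> U"
  then obtain S where "openin X S" and U: "U = S \<inter> T"
    by (auto simp: openin_subtopology)
  then obtain W where "openin X W" "closedin X W" "x \<in> W" "W \<subseteq> S"
    using assms \<open>x \<in> U\<close> unfolding zero_dimensional_def by blast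
  then show "\<exists>V. openin (subtopology X T) V \<and> closedin (subtopology X T) V \<and> x \<in> V \<and> V \<subseteq> U"
    using U \<open>x \<in> U\<close>
    by (intro exI[of _ "T \<inter> W"]) (auto intro: openin_subtopology_Int2 closedin_subtopology_Int_closed)
qed

lemma zero_dimensional_imp_regular_space:
  assumes "zero_dimensional X"
  shows "regular_space X"
  unfolding regular_space_def
proof (intro allI impI, elim conjE)
  fix C a
  assume C: "closedin X C" and a: "a \<in> topspace X - C"
  then obtain W where "openin X W" "closedin X W" "a \<in> W" "W \<subseteq> topspace X - C"
    using assms unfolding zero_dimensional_def by blast
  then show "\<exists>U V. openin X U \<and> openin X V \<and> a \<in> U \<and> C \<subseteq> V \<and> disjnt U V"
    using closedin_subset[OF C]
    by (intro exI[of _ W] exI[of _ "topspace X - W"]) (auto simp: disjnt_def)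
qed

lemma korovin_mapping_attains_pair:
  assumes "korovin_mapping X f" and "a \<in> topspace X" and "b \<in> topspace X" and "d \<noteq> 0"
  shows "\<exists>s. f s = a \<and> f (s + d) = b"
proof -
  define e where "e = (\<lambda>k. if k = 0 then a else if k = d then b else undefined)"
  have "e \<in> PiE {0, d} (\<lambda>_. topspace X)"
    using assms(2-4) by (auto simp: e_def PiE_iff extensional_def)
  also have "\<dots> = (\<lambda>h. restrict h {0, d}) ` orbit_of f"
    using assms(1) by (simp add: korovin_mapping_def)
  finally obtain s where "e = restrict (shift_act s f) {0, d}"
    by (auto simp: orbit_of_def)
  then have "e 0 = f s" and "e d = f (d + s)"
    by (simp_all add: shift_act_def)
  then show ?thesis
    using assms(4) by (auto simp: e_def add.commute)
qed

lemma korovin_orbit_t1_space: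
  assumes "korovin_mapping X f" and "\<not> anti_discrete X"
  shows "t1_space (subtopology (product_topology (\<lambda>_. X) UNIV) (orbit_of f))"
    (is "t1_space (subtopology ?P _)")
  unfolding t1_space_def
proof (intro ballI impI)
  obtain U where U: "openin X U" "U \<noteq> {}" "U \<noteq> topspace X"
    using assms(2) unfolding anti_discrete_def by blast
  then obtain a b where a: "a \<in> U" "a \<in> topspace X" and b: "b \<in> topspace X" "b \<notin> U"
    using openin_subset by blast
  fix p q
  assume p: "p \<in> topspace (subtopology ?P (orbit_of f))"
    and q: "q \<in> topspace (subtopology ?P (orbit_of f))" and "p \<noteq> q"
  then obtain g h where g: "p = shift_act g f" and h: "q = shift_act h f" and "h - g \<noteq> 0"
    by (auto simp: orbit_of_def)
  then obtain s where "f s = a" "f (s + (h - g)) = b"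
    using korovin_mapping_attains_pair[OF assms(1) a(2) b(1)] by blast
  then have p_a: "p (s - g) = a" and q_b: "q (s - g) = b"
    by (simp_all add: g h shift_act_def algebra_simps)
  let ?W = "orbit_of f \<inter> {y \<in> topspace ?P. y (s - g) \<in> U}"
  have "openin ?P {y \<in> topspace ?P. y (s - g) \<in> U}"
    using continuous_map_product_projection[of "s - g" UNIV "\<lambda>_. X"]
    by (intro openin_continuous_map_preimage[OF _ U(1)]) simp
  then have "openin (subtopology ?P (orbit_of f)) ?W"
    by (rule openin_subtopology_Int2)
  moreover have "p \<in> ?W" and "q \<notin> ?W"
    using p p_a a(1) q_b b(2) by auto
  ultimately show "\<exists>W. openin (subtopology ?P (orbit_of f)) W \<and> p \<in> W \<and> q \<notin> W"
    by blast
qed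

theorem proposition4p6:
  fixes X :: "'a topology" and f :: "'g::ab_group_add \<Rightarrow> 'a"
  assumes "\<exists>a b. a \<in> topspace X \<and> b \<in> topspace X \<and> a \<noteq> b"
    and "infinite (UNIV :: 'g set)"
    and "\<not> anti_discrete X"
    and "zero_dimensional X"
    and "korovin_mapping X f"
  shows "t1_space (subtopology (product_topology (\<lambda>_. X) UNIV) (orbit_of f))
       \<and> regular_space (subtopology (product_topology (\<lambda>_. X) UNIV) (orbit_of f))
       \<and> zero_dimensional (subtopology (product_topology (\<lambda>_. X) UNIV) (orbit_of f))"
proof -
  have "zero_dimensional (subtopology (product_topology (\<lambda>_. X) UNIV) (orbit_of f))"
    using assms(4) by (intro zero_dimensional_subtopology zero_dimensional_product_topology)
  then show ?thesis
    using korovin_orbit_t1_space[OF assms(5,3)] zero_dimensional_imp_regular_space by blast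
qed

end
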